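(* Let $\Omega\subset\mathbb{R}^d$ be a bounded Lipschitz domain, $\mathcal{D}\subseteq\mathbb{R}^D$ open, and $\mathcal{H}$ a Hilbert space of functions on $\Omega\times\mathcal{D}$. Let $\mathcal{L}(t)$, $t\in(0,T)$, be linear operators such that $\int_{\mathcal{D}}\mathcal{L}(t)\varphi(\vec{x},\vec{q})\,\mathrm{d}\vec{q}=0$ for all sufficiently regular $\varphi$, and consider the evolution problem $\partial_t\psi=\mathcal{L}(t)\psi$, $\psi(0)=\psi_0$, where $\psi_0(\vec{x},\cdot)$ is a probability density on $\mathcal{D}$ for a.e. $\vec{x}$. Let $\Phi:\mathcal{Z}\times\mathcal{D}\to(0,\infty)$ be smooth with $\mathcal{Z}\subset\mathbb{R}^M$, and let $$\mathcal{M}_\Phi=\{f\in\mathcal{H}: f(\vec{x},\vec{q})=\Phi(z(\vec{x}),\vec{q}) \text{ on }\Omega\times\mathcal{D},\ z:\Omega\to\mathcal{Z}\}.$$ Assume $\mathcal{M}_\Phi$ is a manifold, so that $\partial_z\Phi(z,\cdot)$ has full rank for all $z\in\mathcal{Z}$ and the tangent space at $f=\Phi(z(\cdot),\cdot)$ is $T_f\mathcal{M}_\Phi=\{\partial_z\Phi(z(\cdot),\cdot)w: w\in\mathbb{R}^M\}$. For such $f$ let $\varphi_1(z(\vec{x}),\cdot),\dots,\varphi_M(z(\vec{x}),\cdot)$ be a basis of the range of $\partial_z\Phi(z(\vec{x}),\cdot)$ with $\int_{\mathcal{D}}\varphi_m\varphi_l\,\frac{\mathrm{d}\vec{q}}{f(\vec{x},\vec{q})}=\delta_{m,l}$,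 and define $P_f:\mathcal{H}\to T_f\mathcal{M}_\Phi$ by $$P_f\varphi(\vec{x},\vec{q})=\sum_{m=1}^M\Big(\int_{\mathcal{D}}\varphi_m(z(\vec{x}),\vec{q}')\varphi(\vec{x},\vec{q}')\frac{\mathrm{d}\vec{q}'}{f(\vec{x},\vec{q}')}\Big)\varphi_m(z(\vec{x}),\vec{q}).$$ A variational approximation is a curve $f(t)\in\mathcal{M}_\Phi$ such that for a.e. $(t,\vec{x})\in(0,T)\times\Omega$: $\partial_t f(t)\in T_{f(t)}\mathcal{M}_\Phi$ and $$\int_{\mathcal{D}}\varphi(\vec{x},\vec{q})\big(\partial_t-\mathcal{L}(t)\big)f(t,\vec{x},\vec{q})\,\frac{\mathrm{d}\vec{q}}{f(t,\vec{x},\vec{q})}=0\quad\text{for all }\varphi\in T_{f(t)}\mathcal{M}_\Phi. \qquad(\ast)$$ Then: (i) Condition $(\ast)$ is equivalent to $\partial_t f(t)$ minimizing, among elements of $T_{f(t)}\mathcal{M}_\Phi$, the quantity $\int_{\mathcal{D}}\big(\partial_t f(t,\vec{x},\vec{q})-\mathcal{L}(t)f(t,\vec{x},\vec{q})\big)^2\frac{\mathrm{d}\vec{q}}{f(t,\vec{x},\vec{q})}$. (ii) Condition $(\ast)$ is equivalent to $\partial_t f(t)=P_{f(t)}\mathcal{L}(t)f(t)$. (iii) If $f(t)\in T_{f(t)}\mathcal{M}_\Phi$, then $\int_{\mathcal{D}}f(t,\vec{x},\vec{q})\,\mathrm{d}\vec{q}=\int_{\mathcal{D}}f(0,\vec{x},\vec{q})\,\mathrm{d}\vec{q}$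 for all times $t$ for which the variational approximation exists. (iv) If the evolution problem has an evolution operator $\mathcal{T}(t,s)$, $t,s\in(0,T)$, and $\psi(0)=f(0)$, then for all times $t$ for which the variational approximation exists, $$\psi(t)-f(t)=\int_0^t\mathcal{T}(t,s)\,(I_{\mathcal{H}}-P_{f(s)})\,\mathcal{L}(s)f(s)\,\mathrm{d}s.$$
   Context: $I_{\mathcal{H}}$ denotes the identity on $\mathcal{H}$. The weight $1/f$ in the inner products corresponds to the Fisher--Rao information metric. *)

theory Defs
  imports "HOL-Analysis.Analysis"
begin

definition lipschitz_domain :: "'a::euclidean_space set \<Rightarrow> bool" where
  "lipschitz_domain \<Omega> \<longleftrightarrow> open \<Omega> \<and> connected \<Omega> \<and> \<Omega> \<noteq> {} \<and>
     (\<forall>p\<in>frontier \<Omega>. \<exists>r>0. \<exists>\<nu> C (\<gamma>::'a \<Rightarrow> real).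
        norm \<nu> = 1 \<and> C-lipschitz_on {v. v \<bullet> \<nu> = 0} \<gamma> \<and>
        \<Omega> \<inter> ball p r =
          {y \<in> ball p r. (y - p) \<bullet> \<nu> > \<gamma> ((y - p) - ((y - p) \<bullet> \<nu>) *\<^sub>R \<nu>)})"

fun Ck_on :: "nat \<Rightarrow> 'a::real_normed_vector set \<Rightarrow> ('a \<Rightarrow> real) \<Rightarrow> bool" where
  "Ck_on 0 S F \<longleftrightarrow> continuous_on S F"
| "Ck_on (Suc k) S F \<longleftrightarrow> continuous_on S F \<and> (\<forall>p\<in>S. F differentiable (at p)) \<and>
      (\<forall>v. Ck_on k S (\<lambda>p. frechet_derivative F (at p) v))"

definition smooth_on :: "'a::real_normed_vector set \<Rightarrow> ('a \<Rightarrow> real) \<Rightarrow> bool" where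
  "smooth_on S F \<longleftrightarrow> open S \<and> (\<forall>k. Ck_on k S F)"

text \<open>The fibre at the parameter value \<zeta> of the tangent space:
  functions q \<mapsto> \<partial>_z\<Phi>(\<zeta>,q) w, w \<in> R^M (compared on D).\<close>
definition tangent :: "(real^'m \<Rightarrow> 'q \<Rightarrow> real) \<Rightarrow> 'q set \<Rightarrow> real^'m \<Rightarrow> ('q \<Rightarrow> real) \<Rightarrow> bool" where
  "tangent \<Phi> D \<zeta> g \<longleftrightarrow> (\<exists>w. \<forall>q\<in>D. g q = frechet_derivative (\<lambda>z. \<Phi> z q) (at \<zeta>) w)"

definition wL2 :: "'q::euclidean_space set \<Rightarrow> ('q \<Rightarrow> real) \<Rightarrow> ('q \<Rightarrow> real) \<Rightarrow> bool" where
  "wL2 D w g \<longleftrightarrow> (\<lambda>q. indicator D q * g q) \<in> borel_measurable lborel \<and>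
                  set_integrable lborel D (\<lambda>q. (g q)\<^sup>2 / w q)"

text \<open>Galerkin condition (*) at a fixed (t,x): fv = f(t,x,.), dfv = \<partial>_t f(t,x,.),
  Lfv = (L(t) f(t))(x,.).\<close>
definition galerkin :: "(real^'m \<Rightarrow> 'q \<Rightarrow> real) \<Rightarrow> 'q::euclidean_space set \<Rightarrow> real^'m
    \<Rightarrow> ('q \<Rightarrow> real) \<Rightarrow> ('q \<Rightarrow> real) \<Rightarrow> ('q \<Rightarrow> real) \<Rightarrow> bool" where
  "galerkin \<Phi> D \<zeta> fv dfv Lfv \<longleftrightarrow>
     (\<forall>\<phi>. tangent \<Phi> D \<zeta> \<phi> \<longrightarrow> (LINT q:D|lborel. \<phi> q * (dfv q - Lfv q) / fv q) = 0)"

text \<open>The projection P_f at a fixed x (with z(x) = \<zeta>), built from the basis bas m \<zeta>.\<close>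
definition projP :: "'q::euclidean_space set \<Rightarrow> ('m::finite \<Rightarrow> real^'m \<Rightarrow> 'q \<Rightarrow> real) \<Rightarrow> real^'m
    \<Rightarrow> ('q \<Rightarrow> real) \<Rightarrow> ('q \<Rightarrow> real) \<Rightarrow> 'q \<Rightarrow> real" where
  "projP D bas \<zeta> fv \<phi> q = (\<Sum>m\<in>UNIV. (LINT q':D|lborel. bas m \<zeta> q' * \<phi> q' / fv q') * bas m \<zeta> q)"

definition evolution_operator :: "real \<Rightarrow> (real \<Rightarrow> 'h::real_normed_vector \<Rightarrow> 'h) \<Rightarrow> 'h set
    \<Rightarrow> (real \<Rightarrow> real \<Rightarrow> 'h \<Rightarrow> 'h) \<Rightarrow> bool" where
  "evolution_operator T L Dom Tev \<longleftrightarrow>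
     (\<forall>t s. 0 \<le> s \<and> s \<le> t \<and> t < T \<longrightarrow> bounded_linear (Tev t s)) \<and>
     (\<forall>s. 0 \<le> s \<and> s < T \<longrightarrow> Tev s s = id) \<and>
     (\<forall>t r s. 0 \<le> s \<and> s \<le> r \<and> r \<le> t \<and> t < T \<longrightarrow> Tev t r \<circ> Tev r s = Tev t s) \<and>
     (\<forall>t s g. 0 \<le> s \<and> s \<le> t \<and> t < T \<and> g \<in> Dom \<longrightarrow> Tev t s g \<in> Dom) \<and>
     (\<forall>s g. 0 \<le> s \<and> s < T \<longrightarrow> continuous_on {s..<T} (\<lambda>t. Tev t s g)) \<and>
     (\<forall>t g. 0 \<le> t \<and> t < T \<longrightarrow> continuous_on {0..t} (\<lambda>s. Tev t s g)) \<and>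
     (\<forall>s g. 0 \<le> s \<and> s < T \<and> g \<in> Dom \<longrightarrow>
        (\<forall>t\<in>{s<..<T}. ((\<lambda>t. Tev t s g) has_vector_derivative L t (Tev t s g)) (at t))) \<and>
     (\<forall>t g. 0 \<le> t \<and> t < T \<and> g \<in> Dom \<longrightarrow>
        (\<forall>s\<in>{0<..<t}. ((\<lambda>s. Tev t s g) has_vector_derivative - Tev t s (L s g)) (at s)))"

end

theory Submission
  imports Defs
begin

text \<open>
  At a fixed \<open>(t, x)\<close> everything happens in the \<open>M\<close>-dimensional tangent space, spanned by the
  frame \<open>\<phi>\<^sub>1, \<dots>, \<phi>\<^sub>M\<close>, which is orthonormal in \<open>L\<^sup>2(D, dq/f)\<close>. For \<open>g = \<Sum> c\<^sub>m \<phi>\<^sub>m\<close> one has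
  \<open>\<parallel>g - L f\<parallel>\<^sup>2 = \<Sum> (c\<^sub>m - \<langle>\<phi>\<^sub>m, L f\<rangle>)\<^sup>2 + const\<close>, so the Galerkin condition, the least-squares
  condition and \<open>\<partial>\<^sub>t f = P\<^sub>f L f\<close> all say that the coefficients of \<open>\<partial>\<^sub>t f\<close> are \<open>\<langle>\<phi>\<^sub>m, L f\<rangle>\<close>.
  If \<open>f\<close> is itself tangent, testing with \<open>\<phi> = f\<close> cancels the weight and gives
  \<open>\<partial>\<^sub>t \<integral> f dq = \<integral> L f dq = 0\<close>.
  Finally, \<open>s \<mapsto> T(t,s) u(s)\<close> has derivative \<open>T(t,s) (u'(s) - L(s) u(s))\<close>; integrating this
  for \<open>u = \<psi>\<close> (no defect) and for \<open>u = f\<close> (defect \<open>-(I - P\<^sub>f) L f\<close> almost everywhere) gives the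
  error formula. The uniform bound on \<open>T(t,s)\<close> needed for the product rule comes from the
  uniform boundedness principle.
\<close>

section \<open>Weighted \<open>L\<^sup>2\<close> spaces and orthonormal frames\<close>

definition wL2_inner :: "'q::euclidean_space set \<Rightarrow> ('q \<Rightarrow> real) \<Rightarrow> ('q \<Rightarrow> real) \<Rightarrow> ('q \<Rightarrow> real) \<Rightarrow> real"
  where "wL2_inner D w u v = (LINT q:D|lborel. u q * v q / w q)"

definition in_span_on :: "'q set \<Rightarrow> ('m::finite \<Rightarrow> 'q \<Rightarrow> real) \<Rightarrow> ('q \<Rightarrow> real) \<Rightarrow> bool"
  where "in_span_on D b g \<longleftrightarrow> (\<exists>c. \<forall>q\<in>D. g q = (\<Sum>m\<in>UNIV. c m * b m q))"

lemma in_span_onI: "\<forall>q\<in>D. g q = (\<Sum>m\<in>UNIV. c m * b m q) \<Longrightarrow> in_span_on D b g"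
  unfolding in_span_on_def by blast

lemma wL2_inner_commute: "wL2_inner D w u v = wL2_inner D w v u"
  unfolding wL2_inner_def by (simp add: mult.commute)

lemma wL2_inner_cong:
  assumes "D \<in> sets lborel" "\<And>q. q \<in> D \<Longrightarrow> u q = u' q" "\<And>q. q \<in> D \<Longrightarrow> v q = v' q"
    "\<And>q. q \<in> D \<Longrightarrow> w q = w' q"
  shows "wL2_inner D w u v = wL2_inner D w' u' v'"
  unfolding wL2_inner_def using assms by (intro set_lebesgue_integral_cong) auto

lemma wL2_cong:
  assumes "\<And>q. q \<in> D \<Longrightarrow> g q = g' q" "\<And>q. q \<in> D \<Longrightarrow> w q = w' q"
  shows "wL2 D w g \<longleftrightarrow> wL2 D w' g'"
proof -
  have "(\<lambda>q. indicator D q * g q) = (\<lambda>q. indicator D q * g' q)"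
    using assms by (auto simp: fun_eq_iff indicator_def)
  moreover have "set_integrable lborel D (\<lambda>q. (g q)\<^sup>2 / w q) \<longleftrightarrow>
      set_integrable lborel D (\<lambda>q. (g' q)\<^sup>2 / w' q)"
    using assms by (intro set_integrable_cong) auto
  ultimately show ?thesis
    unfolding wL2_def by simp
qed

locale weighted_L2 =
  fixes D :: "'q::euclidean_space set" and w :: "'q \<Rightarrow> real"
  assumes sets_D: "D \<in> sets lborel"
    and weight_measurable: "(\<lambda>q. indicator D q * w q) \<in> borel_measurable lborel"
    and weight_pos: "\<And>q. q \<in> D \<Longrightarrow> 0 < w q"
begin

lemma wL2_product_integrable:
  assumes u: "wL2 D w u" and v: "wL2 D w v"
  shows "set_integrable lborel D (\<lambda>q. u q * v q / w q)"
  unfolding set_integrable_def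
proof (rule Bochner_Integration.integrable_bound)
  show "integrable lborel (\<lambda>q. indicator D q *\<^sub>R ((u q)\<^sup>2 / w q) + indicator D q *\<^sub>R ((v q)\<^sup>2 / w q))"
    using u v unfolding wL2_def set_integrable_def by auto
  have "(\<lambda>q. indicator D q * u q) \<in> borel_measurable lborel"
    and "(\<lambda>q. indicator D q * v q) \<in> borel_measurable lborel"
    using u v unfolding wL2_def by auto
  from borel_measurable_divide[OF borel_measurable_times[OF this] weight_measurable]
  have "(\<lambda>q. (indicator D q * u q) * (indicator D q * v q) / (indicator D q * w q))
      \<in> borel_measurable lborel" .
  moreover have "(\<lambda>q. indicator D q *\<^sub>R (u q * v q / w q)) =
      (\<lambda>q. (indicator D q * u q) * (indicator D q * v q) / (indicator D q * w q))"
    by (auto simp: fun_eq_iff indicator_def)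
  ultimately show "(\<lambda>q. indicator D q *\<^sub>R (u q * v q / w q)) \<in> borel_measurable lborel"
    by simp
  show "AE q in lborel. norm (indicator D q *\<^sub>R (u q * v q / w q))
      \<le> norm (indicator D q *\<^sub>R ((u q)\<^sup>2 / w q) + indicator D q *\<^sub>R ((v q)\<^sup>2 / w q))"
  proof (rule AE_I2)
    fix q
    show "norm (indicator D q *\<^sub>R (u q * v q / w q))
      \<le> norm (indicator D q *\<^sub>R ((u q)\<^sup>2 / w q) + indicator D q *\<^sub>R ((v q)\<^sup>2 / w q))"
    proof (cases "q \<in> D")
      case True
      have "2 * \<bar>u q\<bar> * \<bar>v q\<bar> \<le> (u q)\<^sup>2 + (v q)\<^sup>2"
        using sum_squares_bound[of "\<bar>u q\<bar>" "\<bar>v q\<bar>"] by simp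
      moreover have "0 \<le> \<bar>u q\<bar> * \<bar>v q\<bar>"
        by simp
      ultimately
      have "\<bar>u q * v q\<bar> \<le> (u q)\<^sup>2 + (v q)\<^sup>2"
        unfolding abs_mult by linarith
      then have "\<bar>u q * v q\<bar> / w q \<le> ((u q)\<^sup>2 + (v q)\<^sup>2) / w q"
        using weight_pos[OF True] by (simp add: divide_right_mono)
      then show ?thesis
        using True weight_pos[OF True] by (simp add: abs_div add_divide_distrib)
    qed simp
  qed
qed


lemma wL2_add_scaled:
  assumes u: "wL2 D w u" and v: "wL2 D w v"
  shows "wL2 D w (\<lambda>q. a * u q + c * v q)"
proof -
  have "(\<lambda>q. indicator D q * (a * u q + c * v q)) =
      (\<lambda>q. a * (indicator D q * u q) + c * (indicator D q * v q))"
    by (auto simp: fun_eq_iff algebra_simps)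
  moreover have "(\<lambda>q. indicator D q * u q) \<in> borel_measurable lborel"
    and "(\<lambda>q. indicator D q * v q) \<in> borel_measurable lborel"
    using u v unfolding wL2_def by auto
  ultimately have "(\<lambda>q. indicator D q * (a * u q + c * v q)) \<in> borel_measurable lborel"
    by simp
  moreover have "set_integrable lborel D
      (\<lambda>q. a\<^sup>2 * ((u q)\<^sup>2 / w q) + (2 * a * c * (u q * v q / w q) + c\<^sup>2 * ((v q)\<^sup>2 / w q)))"
    using u v wL2_product_integrable[OF u v] unfolding wL2_def
    by (intro set_integral_add set_integrable_mult_right) auto
  moreover have "(\<lambda>q. (a * u q + c * v q)\<^sup>2 / w q) =
      (\<lambda>q. a\<^sup>2 * ((u q)\<^sup>2 / w q) + (2 * a * c * (u q * v q / w q) + c\<^sup>2 * ((v q)\<^sup>2 / w q)))"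
    by (rule ext) (simp add: power2_eq_square divide_inverse algebra_simps)
  ultimately show ?thesis
    unfolding wL2_def by simp
qed

lemma wL2_lincomb:
  assumes "finite S" and "\<And>m. m \<in> S \<Longrightarrow> wL2 D w (u m)"
  shows "wL2 D w (\<lambda>q. \<Sum>m\<in>S. c m * u m q)"
  using assms
proof (induction S rule: finite_induct)
  case empty
  then show ?case
    by (simp add: wL2_def set_integrable_def)
next
  case (insert m S)
  then show ?case
    using wL2_add_scaled[of "u m" "\<lambda>q. \<Sum>m\<in>S. c m * u m q" "c m" 1] by simp
qed

lemma wL2_inner_add_scaled_left:
  assumes u: "wL2 D w u" and v: "wL2 D w v" and y: "wL2 D w y"
  shows "wL2_inner D w (\<lambda>q. a * u q + c * v q) y = a * wL2_inner D w u y + c * wL2_inner D w v y"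
proof -
  have "(\<lambda>q. (a * u q + c * v q) * y q / w q) = (\<lambda>q. a * (u q * y q / w q) + c * (v q * y q / w q))"
    by (simp add: fun_eq_iff add_divide_distrib algebra_simps)
  then have "wL2_inner D w (\<lambda>q. a * u q + c * v q) y
      = (LINT q:D|lborel. a * (u q * y q / w q) + c * (v q * y q / w q))"
    unfolding wL2_inner_def by (simp only:)
  also have "\<dots> = (LINT q:D|lborel. a * (u q * y q / w q)) + (LINT q:D|lborel. c * (v q * y q / w q))"
    by (intro set_integral_add set_integrable_mult_right wL2_product_integrable u v y)
  also have "\<dots> = a * wL2_inner D w u y + c * wL2_inner D w v y"
    unfolding wL2_inner_def by (simp only: set_integral_mult_right)
  finally show ?thesis .
qed

lemma wL2_diff: "wL2 D w u \<Longrightarrow> wL2 D w v \<Longrightarrow> wL2 D w (\<lambda>q. u q - v q)"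
  using wL2_add_scaled[of u v 1 "-1"] by simp

lemma wL2_inner_diff_left:
  assumes "wL2 D w u" "wL2 D w v" "wL2 D w y"
  shows "wL2_inner D w (\<lambda>q. u q - v q) y = wL2_inner D w u y - wL2_inner D w v y"
  using wL2_inner_add_scaled_left[OF assms, of 1 "-1"] by simp

lemma wL2_inner_lincomb_left:
  assumes "finite S" and "\<And>m. m \<in> S \<Longrightarrow> wL2 D w (u m)" and y: "wL2 D w y"
  shows "wL2_inner D w (\<lambda>q. \<Sum>m\<in>S. c m * u m q) y = (\<Sum>m\<in>S. c m * wL2_inner D w (u m) y)"
  using assms(1,2)
proof (induction S rule: finite_induct)
  case empty
  then show ?case
    by (simp add: wL2_inner_def)
next
  case (insert m S)
  then show ?case
    using wL2_inner_add_scaled_left[OF _ wL2_lincomb y, of "u m" S u "c m" 1 c] by simp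
qed

end

locale orthonormal_frame = weighted_L2 D w
  for D :: "'q::euclidean_space set" and w :: "'q \<Rightarrow> real" +
  fixes b :: "'m::finite \<Rightarrow> 'q \<Rightarrow> real"
  assumes frame_wL2: "wL2 D w (b m)"
    and frame_orthonormal: "wL2_inner D w (b m) (b l) = (if m = l then 1 else 0)"
begin

lemma in_span_on_frame: "in_span_on D b (b l)"
  unfolding in_span_on_def by (rule exI[of _ "\<lambda>m. of_bool (m = l)"]) simp

lemma wL2_frame_lincomb: "wL2 D w (\<lambda>q. \<Sum>m\<in>UNIV. c m * b m q)"
  by (rule wL2_lincomb) (simp_all add: frame_wL2)

lemma wL2_in_span_on:
  assumes "in_span_on D b h"
  shows "wL2 D w h"
proof -
  obtain c where "\<forall>q\<in>D. h q = (\<Sum>m\<in>UNIV. c m * b m q)"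
    using assms unfolding in_span_on_def by blast
  then have "wL2 D w h \<longleftrightarrow> wL2 D w (\<lambda>q. \<Sum>m\<in>UNIV. c m * b m q)"
    by (intro wL2_cong) auto
  then show ?thesis
    using wL2_frame_lincomb by simp
qed

lemma wL2_inner_lincomb_frame: "wL2_inner D w (\<lambda>q. \<Sum>m\<in>UNIV. c m * b m q) (b l) = c l"
  by (simp add: wL2_inner_lincomb_left frame_wL2 frame_orthonormal flip: of_bool_def)

context
  fixes g :: "'q \<Rightarrow> real"
  assumes g: "wL2 D w g"
begin

lemma wL2_inner_frame_residual:
  "wL2_inner D w (b l) (\<lambda>q. (\<Sum>m\<in>UNIV. c m * b m q) - g q) = c l - wL2_inner D w (b l) g"
  using wL2_inner_diff_left[OF wL2_frame_lincomb g frame_wL2]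
  by (simp add: wL2_inner_commute[of D w "b l"] wL2_inner_lincomb_frame)

lemma wL2_inner_lincomb_residual:
  "wL2_inner D w (\<lambda>q. \<Sum>m\<in>UNIV. e m * b m q) (\<lambda>q. (\<Sum>m\<in>UNIV. c m * b m q) - g q)
    = (\<Sum>m\<in>UNIV. e m * (c m - wL2_inner D w (b m) g))"
  using wL2_diff[OF wL2_frame_lincomb g]
  by (simp add: wL2_inner_lincomb_left frame_wL2 wL2_inner_frame_residual)

lemma wL2_inner_residual_self:
  "wL2_inner D w (\<lambda>q. (\<Sum>m\<in>UNIV. c m * b m q) - g q) (\<lambda>q. (\<Sum>m\<in>UNIV. c m * b m q) - g q)
    = (\<Sum>m\<in>UNIV. (c m - wL2_inner D w (b m) g)\<^sup>2)
      + (wL2_inner D w g g - (\<Sum>m\<in>UNIV. (wL2_inner D w (b m) g)\<^sup>2))"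
proof -
  define a where "a m = wL2_inner D w (b m) g" for m
  let ?v = "\<lambda>q. \<Sum>m\<in>UNIV. c m * b m q"
  have v: "wL2 D w ?v"
    by (rule wL2_frame_lincomb)
  have r: "wL2 D w (\<lambda>q. ?v q - g q)"
    by (rule wL2_diff[OF v g])
  have "wL2_inner D w ?v g = (\<Sum>m\<in>UNIV. c m * a m)"
    unfolding a_def by (rule wL2_inner_lincomb_left[OF finite_class.finite_UNIV frame_wL2 g])
  then have residual_g: "wL2_inner D w (\<lambda>q. ?v q - g q) g = (\<Sum>m\<in>UNIV. c m * a m) - wL2_inner D w g g"
    using wL2_inner_diff_left[OF v g g] by simp
  have "wL2_inner D w (\<lambda>q. ?v q - g q) (\<lambda>q. ?v q - g q)
      = wL2_inner D w ?v (\<lambda>q. ?v q - g q) - wL2_inner D w g (\<lambda>q. ?v q - g q)"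
    by (rule wL2_inner_diff_left[OF v g r])
  also have "\<dots> = (\<Sum>m\<in>UNIV. c m * (c m - a m)) - ((\<Sum>m\<in>UNIV. c m * a m) - wL2_inner D w g g)"
    using residual_g wL2_inner_commute[of D w g "\<lambda>q. ?v q - g q"]
    by (simp only: wL2_inner_lincomb_residual a_def)
  also have "(\<Sum>m\<in>UNIV. c m * (c m - a m)) - (\<Sum>m\<in>UNIV. c m * a m)
      = (\<Sum>m\<in>UNIV. (c m - a m)\<^sup>2) - (\<Sum>m\<in>UNIV. (a m)\<^sup>2)"
    by (simp only: sum_subtractf[symmetric]) (simp add: power2_eq_square algebra_simps)
  then have "(\<Sum>m\<in>UNIV. c m * (c m - a m)) - ((\<Sum>m\<in>UNIV. c m * a m) - wL2_inner D w g g)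
      = (\<Sum>m\<in>UNIV. (c m - a m)\<^sup>2) + (wL2_inner D w g g - (\<Sum>m\<in>UNIV. (a m)\<^sup>2))"
    by linarith
  finally show ?thesis
    unfolding a_def .
qed

lemma residual_integral_lincomb:
  assumes "\<forall>q\<in>D. h q = (\<Sum>m\<in>UNIV. c m * b m q)"
  shows "(LINT q:D|lborel. (h q - g q)\<^sup>2 / w q)
    = (\<Sum>m\<in>UNIV. (c m - wL2_inner D w (b m) g)\<^sup>2)
      + (wL2_inner D w g g - (\<Sum>m\<in>UNIV. (wL2_inner D w (b m) g)\<^sup>2))"
proof -
  have "(LINT q:D|lborel. (h q - g q)\<^sup>2 / w q) = wL2_inner D w (\<lambda>q. h q - g q) (\<lambda>q. h q - g q)"
    unfolding wL2_inner_def power2_eq_square ..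
  also have "\<dots> = wL2_inner D w (\<lambda>q. (\<Sum>m\<in>UNIV. c m * b m q) - g q) (\<lambda>q. (\<Sum>m\<in>UNIV. c m * b m q) - g q)"
    using assms by (intro wL2_inner_cong[OF sets_D]) auto
  finally show ?thesis
    by (simp only: wL2_inner_residual_self)
qed

context
  fixes h :: "'q \<Rightarrow> real" and d :: "'m \<Rightarrow> real"
  assumes h: "\<forall>q\<in>D. h q = (\<Sum>m\<in>UNIV. d m * b m q)"
begin

lemma residual_orthogonal_iff_coeffs:
  "(\<forall>\<phi>. in_span_on D b \<phi> \<longrightarrow> wL2_inner D w \<phi> (\<lambda>q. h q - g q) = 0)
    \<longleftrightarrow> d = (\<lambda>m. wL2_inner D w (b m) g)"
proof
  assume orth: "\<forall>\<phi>. in_span_on D b \<phi> \<longrightarrow> wL2_inner D w \<phi> (\<lambda>q. h q - g q) = 0"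
  show "d = (\<lambda>m. wL2_inner D w (b m) g)"
  proof
    fix l
    have "wL2_inner D w (b l) (\<lambda>q. h q - g q) = wL2_inner D w (b l) (\<lambda>q. (\<Sum>m\<in>UNIV. d m * b m q) - g q)"
      using h by (intro wL2_inner_cong[OF sets_D]) auto
    then show "d l = wL2_inner D w (b l) g"
      using orth in_span_on_frame[of l] by (simp add: wL2_inner_frame_residual)
  qed
next
  assume d: "d = (\<lambda>m. wL2_inner D w (b m) g)"
  show "\<forall>\<phi>. in_span_on D b \<phi> \<longrightarrow> wL2_inner D w \<phi> (\<lambda>q. h q - g q) = 0"
  proof (intro allI impI)
    fix \<phi>
    assume "in_span_on D b \<phi>"
    then obtain e where e: "\<forall>q\<in>D. \<phi> q = (\<Sum>m\<in>UNIV. e m * b m q)"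
      unfolding in_span_on_def by blast
    have "wL2_inner D w \<phi> (\<lambda>q. h q - g q)
        = wL2_inner D w (\<lambda>q. \<Sum>m\<in>UNIV. e m * b m q) (\<lambda>q. (\<Sum>m\<in>UNIV. d m * b m q) - g q)"
      using e h by (intro wL2_inner_cong[OF sets_D]) auto
    then show "wL2_inner D w \<phi> (\<lambda>q. h q - g q) = 0"
      by (simp add: wL2_inner_lincomb_residual d)
  qed
qed

lemma least_squares_iff_coeffs:
  "(\<forall>h'. in_span_on D b h' \<longrightarrow>
      (LINT q:D|lborel. (h q - g q)\<^sup>2 / w q) \<le> (LINT q:D|lborel. (h' q - g q)\<^sup>2 / w q))
    \<longleftrightarrow> d = (\<lambda>m. wL2_inner D w (b m) g)"
proof
  assume min: "\<forall>h'. in_span_on D b h' \<longrightarrow>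
      (LINT q:D|lborel. (h q - g q)\<^sup>2 / w q) \<le> (LINT q:D|lborel. (h' q - g q)\<^sup>2 / w q)"
  let ?a = "\<lambda>m. wL2_inner D w (b m) g"
  have "in_span_on D b (\<lambda>q. \<Sum>m\<in>UNIV. ?a m * b m q)"
    by (rule in_span_onI[where c = ?a]) simp
  then have "(\<Sum>m\<in>UNIV. (d m - ?a m)\<^sup>2) \<le> (\<Sum>m\<in>UNIV. (?a m - ?a m)\<^sup>2)"
    using min residual_integral_lincomb[OF h] residual_integral_lincomb[of _ ?a] by fastforce
  then have "(\<Sum>m\<in>UNIV. (d m - ?a m)\<^sup>2) = 0"
    using sum_nonneg[of UNIV "\<lambda>m. (d m - ?a m)\<^sup>2"] by simp
  then show "d = ?a"
    by (simp add: fun_eq_iff sum_nonneg_eq_0_iff)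
next
  assume d: "d = (\<lambda>m. wL2_inner D w (b m) g)"
  show "\<forall>h'. in_span_on D b h' \<longrightarrow>
      (LINT q:D|lborel. (h q - g q)\<^sup>2 / w q) \<le> (LINT q:D|lborel. (h' q - g q)\<^sup>2 / w q)"
  proof (intro allI impI)
    fix h'
    assume "in_span_on D b h'"
    then obtain c where c: "\<forall>q\<in>D. h' q = (\<Sum>m\<in>UNIV. c m * b m q)"
      unfolding in_span_on_def by blast
    show "(LINT q:D|lborel. (h q - g q)\<^sup>2 / w q) \<le> (LINT q:D|lborel. (h' q - g q)\<^sup>2 / w q)"
      unfolding residual_integral_lincomb[OF h] residual_integral_lincomb[OF c]
      by (simp add: d sum_nonneg)
  qed
qed

end

end

end

section \<open>The tangent space of the manifold\<close>

lemma smooth_on_continuous_on: "smooth_on S F \<Longrightarrow> continuous_on S F"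
  using Ck_on.simps(1) unfolding smooth_on_def by blast

lemma smooth_on_differentiable: "smooth_on S F \<Longrightarrow> p \<in> S \<Longrightarrow> F differentiable (at p)"
  using Ck_on.simps(2)[of 0] unfolding smooth_on_def by blast

lemma linear_frechet_derivative_fst:
  assumes "smooth_on (Z \<times> D) (\<lambda>p. F (fst p) (snd p))" and "\<zeta> \<in> Z" and "q \<in> D"
  shows "linear (frechet_derivative (\<lambda>z. F z q) (at \<zeta>))"
proof -
  have "(\<lambda>p. F (fst p) (snd p)) differentiable (at (\<zeta>, q))"
    using assms by (auto intro: smooth_on_differentiable)
  then have "((\<lambda>p. F (fst p) (snd p)) \<circ> (\<lambda>z. (z, q))) differentiable (at \<zeta>)"
    by (intro differentiable_chain_at) (auto intro: derivative_intros)
  then have "(\<lambda>z. F z q) differentiable (at \<zeta>)"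
    by (simp add: o_def)
  then show ?thesis
    using frechet_derivative_works has_derivative_linear by blast
qed

locale smooth_tangent_frame =
  fixes D :: "'q::euclidean_space set" and Z :: "(real^'m::finite) set"
    and \<Phi> :: "real^'m \<Rightarrow> 'q \<Rightarrow> real" and bas :: "'m \<Rightarrow> real^'m \<Rightarrow> 'q \<Rightarrow> real"
  assumes open_D: "open D"
    and \<Phi>_smooth: "smooth_on (Z \<times> D) (\<lambda>p. \<Phi> (fst p) (snd p))"
    and \<Phi>_pos: "\<And>\<zeta> q. \<zeta> \<in> Z \<Longrightarrow> q \<in> D \<Longrightarrow> \<Phi> \<zeta> q > 0"
    and bas_tangent: "\<And>\<zeta> m. \<zeta> \<in> Z \<Longrightarrow> tangent \<Phi> D \<zeta> (bas m \<zeta>) \<and> wL2 D (\<Phi> \<zeta>) (bas m \<zeta>)"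
    and bas_orthonormal: "\<And>\<zeta> m l. \<zeta> \<in> Z \<Longrightarrow>
                   (LINT q:D|lborel. bas m \<zeta> q * bas l \<zeta> q / \<Phi> \<zeta> q) = (if m = l then 1 else 0)"
    and bas_spans: "\<And>\<zeta> g. \<zeta> \<in> Z \<Longrightarrow> tangent \<Phi> D \<zeta> g \<Longrightarrow>
                   \<exists>c. \<forall>q\<in>D. g q = (\<Sum>m\<in>UNIV. c m * bas m \<zeta> q)"
begin

lemma tangent_iff_in_span_on:
  assumes \<zeta>: "\<zeta> \<in> Z"
  shows "tangent \<Phi> D \<zeta> g \<longleftrightarrow> in_span_on D (\<lambda>m. bas m \<zeta>) g"
proof
  assume "tangent \<Phi> D \<zeta> g"
  then show "in_span_on D (\<lambda>m. bas m \<zeta>) g"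
    unfolding in_span_on_def using bas_spans[OF \<zeta>] by blast
next
  assume "in_span_on D (\<lambda>m. bas m \<zeta>) g"
  then obtain c where c: "\<forall>q\<in>D. g q = (\<Sum>m\<in>UNIV. c m * bas m \<zeta> q)"
    unfolding in_span_on_def by blast
  obtain W where W: "\<And>m q. q \<in> D \<Longrightarrow> bas m \<zeta> q = frechet_derivative (\<lambda>z. \<Phi> z q) (at \<zeta>) (W m)"
    using bas_tangent[OF \<zeta>] unfolding tangent_def by metis
  show "tangent \<Phi> D \<zeta> g"
    unfolding tangent_def
  proof (intro exI ballI)
    fix q
    assume q: "q \<in> D"
    note linear = linear_frechet_derivative_fst[OF \<Phi>_smooth \<zeta> q]
    show "g q = frechet_derivative (\<lambda>z. \<Phi> z q) (at \<zeta>) (\<Sum>m\<in>UNIV. c m *\<^sub>R W m)"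
      using c q W by (simp add: linear_sum[OF linear] linear_scale[OF linear])
  qed
qed

context
  fixes \<zeta> :: "real^'m" and fv :: "'q \<Rightarrow> real"
  assumes \<zeta>: "\<zeta> \<in> Z" and fv: "\<forall>q\<in>D. fv q = \<Phi> \<zeta> q"
begin

lemma orthonormal_frame_at: "orthonormal_frame D fv (\<lambda>m. bas m \<zeta>)"
proof
  show "D \<in> sets lborel"
    using open_D by simp
  have "continuous_on D (\<lambda>q. \<Phi> \<zeta> q)"
    by (rule continuous_on_compose2[OF smooth_on_continuous_on[OF \<Phi>_smooth], of D "\<lambda>q. (\<zeta>, q)", simplified])
      (auto intro!: continuous_intros simp: \<zeta>)
  then have "(\<lambda>q. indicator D q *\<^sub>R \<Phi> \<zeta> q) \<in> borel_measurable borel"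
    using open_D by (intro borel_measurable_continuous_on_indicator) auto
  moreover have "(\<lambda>q. indicator D q *\<^sub>R \<Phi> \<zeta> q) = (\<lambda>q. indicator D q * fv q)"
    using fv by (auto simp: fun_eq_iff indicator_def)
  ultimately show "(\<lambda>q. indicator D q * fv q) \<in> borel_measurable lborel"
    by simp
  show "\<And>q. q \<in> D \<Longrightarrow> 0 < fv q"
    using fv \<Phi>_pos[OF \<zeta>] by simp
  show "wL2 D fv (bas m \<zeta>)" for m
    using bas_tangent[OF \<zeta>] fv wL2_cong[of D "bas m \<zeta>" "bas m \<zeta>" fv "\<Phi> \<zeta>"] by simp
  show "wL2_inner D fv (bas m \<zeta>) (bas l \<zeta>) = (if m = l then 1 else 0)" for m l
    using bas_orthonormal[OF \<zeta>] fv wL2_inner_cong[of D "bas m \<zeta>" "bas m \<zeta>" "bas l \<zeta>" "bas l \<zeta>" fv "\<Phi> \<zeta>"]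
      open_D by (simp add: wL2_inner_def)
qed

interpretation frame: orthonormal_frame D fv "\<lambda>m. bas m \<zeta>"
  by (rule orthonormal_frame_at)

lemma galerkin_iff_residual_orthogonal:
  "galerkin \<Phi> D \<zeta> fv df Lf
    \<longleftrightarrow> (\<forall>\<phi>. in_span_on D (\<lambda>m. bas m \<zeta>) \<phi> \<longrightarrow> wL2_inner D fv \<phi> (\<lambda>q. df q - Lf q) = 0)"
  unfolding galerkin_def wL2_inner_def tangent_iff_in_span_on[OF \<zeta>] ..

lemma projP_eq_lincomb:
  "projP D bas \<zeta> fv Lf q = (\<Sum>m\<in>UNIV. wL2_inner D fv (bas m \<zeta>) Lf * bas m \<zeta> q)"
  unfolding projP_def wL2_inner_def ..

context
  fixes Lf :: "'q \<Rightarrow> real"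
  assumes Lf: "wL2 D fv Lf"
begin

lemma galerkin_iff_least_squares:
  assumes "tangent \<Phi> D \<zeta> df"
  shows "galerkin \<Phi> D \<zeta> fv df Lf \<longleftrightarrow>
    (\<forall>g. tangent \<Phi> D \<zeta> g \<longrightarrow>
       (LINT q:D|lborel. (df q - Lf q)\<^sup>2 / fv q) \<le> (LINT q:D|lborel. (g q - Lf q)\<^sup>2 / fv q))"
proof -
  obtain d where d: "\<forall>q\<in>D. df q = (\<Sum>m\<in>UNIV. d m * bas m \<zeta> q)"
    using assms unfolding tangent_iff_in_span_on[OF \<zeta>] in_span_on_def by blast
  show ?thesis
    unfolding galerkin_iff_residual_orthogonal tangent_iff_in_span_on[OF \<zeta>]
      frame.residual_orthogonal_iff_coeffs[OF Lf d] frame.least_squares_iff_coeffs[OF Lf d] ..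
qed

lemma tangent_galerkin_iff_projection:
  "tangent \<Phi> D \<zeta> df \<and> galerkin \<Phi> D \<zeta> fv df Lf \<longleftrightarrow> (\<forall>q\<in>D. df q = projP D bas \<zeta> fv Lf q)"
proof
  assume "tangent \<Phi> D \<zeta> df \<and> galerkin \<Phi> D \<zeta> fv df Lf"
  moreover obtain d where d: "\<forall>q\<in>D. df q = (\<Sum>m\<in>UNIV. d m * bas m \<zeta> q)"
    using calculation unfolding tangent_iff_in_span_on[OF \<zeta>] in_span_on_def by blast
  ultimately show "\<forall>q\<in>D. df q = projP D bas \<zeta> fv Lf q"
    unfolding galerkin_iff_residual_orthogonal frame.residual_orthogonal_iff_coeffs[OF Lf d] projP_eq_lincomb
    using d by simp
next
  assume "\<forall>q\<in>D. df q = projP D bas \<zeta> fv Lf q"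
  then have d: "\<forall>q\<in>D. df q = (\<Sum>m\<in>UNIV. wL2_inner D fv (bas m \<zeta>) Lf * bas m \<zeta> q)"
    unfolding projP_eq_lincomb .
  then have "tangent \<Phi> D \<zeta> df"
    unfolding tangent_iff_in_span_on[OF \<zeta>] by (rule in_span_onI)
  then show "tangent \<Phi> D \<zeta> df \<and> galerkin \<Phi> D \<zeta> fv df Lf"
    unfolding galerkin_iff_residual_orthogonal frame.residual_orthogonal_iff_coeffs[OF Lf d] by simp
qed

end

lemma galerkin_conserves_mass:
  assumes "tangent \<Phi> D \<zeta> fv" and "tangent \<Phi> D \<zeta> df" and "galerkin \<Phi> D \<zeta> fv df Lf"
    and "set_integrable lborel D Lf"
  shows "(LINT q:D|lborel. df q) = (LINT q:D|lborel. Lf q)"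
proof -
  have fv_nonzero: "fv q \<noteq> 0" if "q \<in> D" for q
    using frame.weight_pos[OF that] by simp
  have "set_integrable lborel D (\<lambda>q. df q * fv q / fv q)"
    using assms(1,2) unfolding tangent_iff_in_span_on[OF \<zeta>]
    by (intro frame.wL2_product_integrable frame.wL2_in_span_on)
  moreover have "set_integrable lborel D (\<lambda>q. df q * fv q / fv q) \<longleftrightarrow> set_integrable lborel D df"
    by (rule set_integrable_cong) (simp_all add: fv_nonzero)
  ultimately have "set_integrable lborel D df"
    by simp
  have "0 = wL2_inner D fv fv (\<lambda>q. df q - Lf q)"
    using assms(1,3) unfolding galerkin_iff_residual_orthogonal tangent_iff_in_span_on[OF \<zeta>] by simp
  also have "\<dots> = (LINT q:D|lborel. df q - Lf q)"
    unfolding wL2_inner_def by (rule set_lebesgue_integral_cong) (simp_all add: open_D fv_nonzero)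
  also have "\<dots> = (LINT q:D|lborel. df q) - (LINT q:D|lborel. Lf q)"
    by (rule set_integral_diff(2)) fact+
  finally show ?thesis
    by simp
qed

end

end

section \<open>Almost everywhere arguments in space and time\<close>

lemma AE_lborel_prod_iterated:
  fixes P :: "'a::euclidean_space \<Rightarrow> 'b::euclidean_space \<Rightarrow> bool"
  assumes "AE p in lborel. P (fst p) (snd p)"
  shows "AE x in lborel. AE y in lborel. P x y"
    and "AE y in lborel. AE x in lborel. P x y"
proof -
  have "AE p in lborel \<Otimes>\<^sub>M lborel. P (fst p) (snd p)"
    using assms by (subst lborel_prod)
  then obtain N where bad_set: "{p \<in> space (lborel \<Otimes>\<^sub>M lborel). \<not> P (fst p) (snd p)} \<subseteq> N"
    and N: "emeasure (lborel \<Otimes>\<^sub>M lborel) N = 0" "N \<in> sets (lborel \<Otimes>\<^sub>M lborel)"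
    by (rule AE_E)
  have bad: "\<And>x y. \<not> P x y \<Longrightarrow> (x, y) \<in> N"
    using bad_set by (auto simp: space_pair_measure)
  have "AE p in (lborel \<Otimes>\<^sub>M lborel :: ('a \<times> 'b) measure). p \<notin> N"
    using N by (intro AE_not_in) auto
  then have outside: "AE x in lborel. AE y in lborel. (x, y) \<notin> N"
    by (rule lborel_pair.AE_pair)
  moreover have "{p \<in> space (lborel \<Otimes>\<^sub>M lborel). (fst p, snd p) \<notin> N} \<in> sets (lborel \<Otimes>\<^sub>M lborel)"
    using sets.compl_sets[OF N(2)] by (simp add: set_diff_eq conj_commute)
  ultimately have "AE y in lborel. AE x in lborel. (x, y) \<notin> N"
    using lborel_pair.AE_commute[of "\<lambda>x y. (x, y) \<notin> N"] by simp
  then show "AE y in lborel. AE x in lborel. P x y"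
    by (elim eventually_mono) (use bad in blast)
  show "AE x in lborel. AE y in lborel. P x y"
    using outside by (elim eventually_mono) (use bad in blast)
qed

lemma AE_lborel_prod_from_fst:
  fixes P :: "'a::euclidean_space \<Rightarrow> 'b::euclidean_space \<Rightarrow> bool"
  assumes "AE x in lborel. x \<in> A \<longrightarrow> (\<forall>y\<in>B. P x y)"
  shows "AE p in lborel. p \<in> A \<times> B \<longrightarrow> P (fst p) (snd p)"
proof -
  obtain N where bad_set: "{x \<in> space lborel. \<not> (x \<in> A \<longrightarrow> (\<forall>y\<in>B. P x y))} \<subseteq> N"
    and N: "emeasure lborel N = 0" "N \<in> sets lborel"
    using assms by (rule AE_E)
  have bad: "\<And>x y. x \<in> A \<Longrightarrow> y \<in> B \<Longrightarrow> \<not> P x y \<Longrightarrow> x \<in> N"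
    using bad_set by auto
  have "N \<times> UNIV \<in> null_sets (lborel \<Otimes>\<^sub>M (lborel :: 'b measure))"
    using N by (intro lborel.times_in_null_sets1) auto
  then have "AE p in lborel \<Otimes>\<^sub>M lborel. p \<in> A \<times> B \<longrightarrow> P (fst p) (snd p)"
    by (rule AE_I') (auto dest: bad)
  then show ?thesis
    by (subst (asm) lborel_prod)
qed

lemma constant_if_derivative_AE_zero:
  fixes M M' :: "real \<Rightarrow> real"
  assumes cont: "continuous_on {a..<b} M"
    and deriv: "\<And>t. t \<in> {a<..<b} \<Longrightarrow> (M has_real_derivative M' t) (at t)"
    and zero: "AE t in lborel. t \<in> {a<..<b} \<longrightarrow> M' t = 0"
    and t: "t \<in> {a..<b}"
  shows "M t = M a"
proof (cases "t = a")
  case False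
  with t have "a < t" "t < b"
    by auto
  then have ftc: "(M' has_integral (M t - M a)) {a..t}"
    using cont deriv
    by (intro fundamental_theorem_of_calculus_interior)
      (auto intro: continuous_on_subset simp: has_real_derivative_iff_has_vector_derivative[symmetric])
  have "AE s in lborel. s \<in> {a..t} \<longrightarrow> M' s = 0"
    using zero AE_lborel_singleton[of a] by eventually_elim (use \<open>t < b\<close> in auto)
  with ftc have "((\<lambda>_. 0) has_integral (M t - M a)) {a..t}"
    by (simp add: has_integral_AE)
  then show ?thesis
    using has_integral_unique[OF has_integral_0] by fastforce
qed simp

lemma AE_constant_if_derivative_AE_zero:
  fixes M M' :: "real \<Rightarrow> 'x::euclidean_space \<Rightarrow> real"
  assumes zero: "AE p in lborel. p \<in> {a<..<b} \<times> \<Omega> \<longrightarrow> M' (fst p) (snd p) = 0"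
    and regular: "\<forall>x\<in>\<Omega>. continuous_on {a..<b} (\<lambda>t. M t x) \<and>
      (\<forall>t\<in>{a<..<b}. ((\<lambda>s. M s x) has_real_derivative M' t x) (at t))"
  shows "AE x in lborel. x \<in> \<Omega> \<longrightarrow> (\<forall>t\<in>{a..<b}. M t x = M a x)"
proof -
  have "AE x in lborel. AE t in lborel. (t, x) \<in> {a<..<b} \<times> \<Omega> \<longrightarrow> M' t x = 0"
    using zero by (intro AE_lborel_prod_iterated(2)) simp
  then show ?thesis
  proof (rule eventually_mono, intro impI ballI)
    fix x t
    assume "AE t in lborel. (t, x) \<in> {a<..<b} \<times> \<Omega> \<longrightarrow> M' t x = 0" and "x \<in> \<Omega>" and "t \<in> {a..<b}"
    then show "M t x = M a x"
      using regular by (intro constant_if_derivative_AE_zero[where M' = "\<lambda>t. M' t x"]) auto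
  qed
qed

lemma AE_eq_if_evaluations_AE_eq:
  fixes ev :: "'h \<Rightarrow> 'x::euclidean_space \<Rightarrow> 'q::euclidean_space \<Rightarrow> real"
  assumes ev_inj: "\<And>h h'. (AE p in lborel. p \<in> \<Omega> \<times> D \<longrightarrow> ev h (fst p) (snd p) = ev h' (fst p) (snd p))
      \<Longrightarrow> h = h'"
    and eq: "AE p in lborel. p \<in> I \<times> \<Omega> \<longrightarrow> (\<forall>q\<in>D. ev (u (fst p)) (snd p) q = ev (v (fst p)) (snd p) q)"
  shows "AE s in lborel. s \<in> I \<longrightarrow> u s = v s"
proof -
  have "AE s in lborel. AE x in lborel. (s, x) \<in> I \<times> \<Omega> \<longrightarrow> (\<forall>q\<in>D. ev (u s) x q = ev (v s) x q)"
    using eq by (intro AE_lborel_prod_iterated(1)) simp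
  then show ?thesis
  proof (rule eventually_mono, intro impI)
    fix s
    assume "AE x in lborel. (s, x) \<in> I \<times> \<Omega> \<longrightarrow> (\<forall>q\<in>D. ev (u s) x q = ev (v s) x q)" and "s \<in> I"
    then have "AE x in lborel. x \<in> \<Omega> \<longrightarrow> (\<forall>q\<in>D. ev (u s) x q = ev (v s) x q)"
      by (auto elim: eventually_mono)
    then show "u s = v s"
      by (intro ev_inj AE_lborel_prod_from_fst)
  qed
qed

section \<open>Uniform boundedness and evolution operators\<close>

lemma uniform_boundedness:
  fixes T :: "'i \<Rightarrow> 'a::{real_normed_vector,complete_space} \<Rightarrow> 'b::real_normed_vector"
  assumes linear: "\<And>i. i \<in> I \<Longrightarrow> bounded_linear (T i)"
    and pointwise_bounded: "\<And>x. \<exists>C. \<forall>i\<in>I. norm (T i x) \<le> C"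
  shows "\<exists>B. \<forall>i\<in>I. \<forall>x. norm (T i x) \<le> B * norm x"
proof -
  define E where "E n = {x. \<forall>i\<in>I. norm (T i x) \<le> real n}" for n :: nat
  have "closed (E n)" for n
  proof -
    have "E n = (\<Inter>i\<in>I. {x. norm (T i x) \<le> real n})"
      by (auto simp: E_def)
    moreover have "closed {x. norm (T i x) \<le> real n}" if "i \<in> I" for i
      by (intro closed_Collect_le continuous_on_norm linear_continuous_on linear that continuous_on_const)
    ultimately show ?thesis
      by auto
  qed
  moreover have "\<Union>(range E) = UNIV"
  proof -
    have "x \<in> \<Union>(range E)" for x
    proof -
      obtain C where "\<forall>i\<in>I. norm (T i x) \<le> C"
        using pointwise_bounded by blast
      then have "x \<in> E (nat \<lceil>C\<rceil>)"
        unfolding E_def by (auto intro: order_trans[OF _ real_nat_ceiling_ge])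
      then show ?thesis
        by blast
    qed
    then show ?thesis
      by blast
  qed
  ultimately have "\<exists>n. interior (E n) \<noteq> {}"
    using Baire_category_alt[of euclidean "range E"]
    by (auto simp: completely_metrizable_space_euclidean closed_closedin[symmetric])
  then obtain n x0 r where r: "0 < r" "ball x0 r \<subseteq> E n"
    by (auto simp: mem_interior)
  have "norm (T i x) \<le> (4 * real n / r) * norm x" if i: "i \<in> I" for i x
  proof (cases "x = 0")
    case False
    interpret bounded_linear "T i"
      by (rule linear[OF i])
    define c where "c = r / (2 * norm x)"
    have c: "0 < c"
      using False r by (simp add: c_def)
    have ball_bound: "norm (T i y) \<le> real n" if "y \<in> ball x0 r" for y
      using r(2) that i unfolding E_def by blast
    have "x0 + c *\<^sub>R x \<in> ball x0 r" and "x0 \<in> ball x0 r"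
      using False r by (simp_all add: c_def dist_norm)
    then have "norm (T i (x0 + c *\<^sub>R x)) \<le> real n" and "norm (T i x0) \<le> real n"
      by (simp_all only: ball_bound)
    moreover have "c * norm (T i x) = norm (T i (x0 + c *\<^sub>R x) - T i x0)"
      using c by (simp add: add scaleR)
    ultimately have "c * norm (T i x) \<le> 2 * real n"
      using norm_triangle_ineq4[of "T i (x0 + c *\<^sub>R x)" "T i x0"] by linarith
    then show ?thesis
      using c False r by (simp add: c_def field_simps)
  qed (simp add: linear_simps linear[OF i])
  then show ?thesis
    by blast
qed

lemma uniform_boundedness_compact:
  fixes T :: "real \<Rightarrow> 'a::{real_normed_vector,complete_space} \<Rightarrow> 'b::real_normed_vector"
  assumes "compact K" and "\<And>s. s \<in> K \<Longrightarrow> bounded_linear (T s)"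
    and "\<And>x. continuous_on K (\<lambda>s. T s x)"
  shows "\<exists>B. \<forall>s\<in>K. \<forall>x. norm (T s x) \<le> B * norm x"
proof (rule uniform_boundedness)
  show "\<exists>C. \<forall>s\<in>K. norm (T s x) \<le> C" for x
    using compact_imp_bounded[OF compact_continuous_image[OF assms(3) assms(1)]]
    by (auto simp: bounded_iff)
qed (use assms in auto)

lemma continuous_on_operator_apply:
  fixes T :: "real \<Rightarrow> 'a::real_normed_vector \<Rightarrow> 'b::real_normed_vector"
  assumes bound: "\<And>s x. s \<in> S \<Longrightarrow> norm (T s x) \<le> B * norm x"
    and linear: "\<And>s. s \<in> S \<Longrightarrow> bounded_linear (T s)"
    and strong: "\<And>x. continuous_on S (\<lambda>s. T s x)"
    and u: "continuous_on S u"
  shows "continuous_on S (\<lambda>s. T s (u s))"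
  unfolding continuous_on_def
proof
  fix s0
  assume s0: "s0 \<in> S"
  let ?F = "at s0 within S"
  have in_S: "eventually (\<lambda>s. s \<in> S) ?F"
    by (auto simp: eventually_at_filter)
  have "((\<lambda>s. u s - u s0) \<longlongrightarrow> 0) ?F"
    using u s0 unfolding continuous_on_def by (simp add: LIM_zero)
  then have "((\<lambda>s. B * norm (u s - u s0)) \<longlongrightarrow> 0) ?F"
    using tendsto_mult_right_zero tendsto_norm_zero by blast
  moreover have "eventually (\<lambda>s. norm (T s (u s - u s0)) \<le> B * norm (u s - u s0)) ?F"
    using in_S by eventually_elim (rule bound)
  ultimately have "((\<lambda>s. T s (u s - u s0)) \<longlongrightarrow> 0) ?F"
    by (rule Lim_null_comparison[rotated])
  moreover have "((\<lambda>s. T s (u s0)) \<longlongrightarrow> T s0 (u s0)) ?F"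
    using strong s0 unfolding continuous_on_def by blast
  ultimately have "((\<lambda>s. T s (u s - u s0) + T s (u s0)) \<longlongrightarrow> T s0 (u s0)) ?F"
    using tendsto_add by fastforce
  moreover have "eventually (\<lambda>s. T s (u s - u s0) + T s (u s0) = T s (u s)) ?F"
    using in_S by eventually_elim (simp add: linear_simps linear)
  ultimately show "((\<lambda>s. T s (u s)) \<longlongrightarrow> T s0 (u s0)) ?F"
    by (rule Lim_transform_eventually)
qed

lemma has_vector_derivative_operator_apply:
  fixes T :: "real \<Rightarrow> 'a::real_normed_vector \<Rightarrow> 'b::real_normed_vector"
  assumes S: "open S" "s \<in> S"
    and bound: "\<And>y x. y \<in> S \<Longrightarrow> norm (T y x) \<le> B * norm x"
    and linear: "\<And>y. y \<in> S \<Longrightarrow> bounded_linear (T y)"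
    and strong: "continuous (at s) (\<lambda>y. T y u')"
    and u: "(u has_vector_derivative u') (at s)"
    and T_deriv: "((\<lambda>y. T y (u s)) has_vector_derivative A) (at s)"
  shows "((\<lambda>y. T y (u y)) has_vector_derivative A + T s u') (at s)"
proof -
  interpret Ts: bounded_linear "T s"
    by (rule linear[OF S(2)])
  define R where "R y = (u y - u s - (y - s) *\<^sub>R u') /\<^sub>R norm (y - s)" for y
  have "(R \<longlongrightarrow> 0) (at s)"
    using u unfolding R_def has_vector_derivative_def has_derivative_at_within by simp
  moreover have "((\<lambda>y. T y u' - T s u') \<longlongrightarrow> 0) (at s)"
    using strong by (simp add: continuous_at LIM_zero)
  ultimately have "((\<lambda>y. B * norm (R y) + norm (T y u' - T s u')) \<longlongrightarrow> 0) (at s)"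
    using tendsto_add[OF tendsto_mult_right_zero[OF tendsto_norm_zero] tendsto_norm_zero] by fastforce
  moreover
  text \<open>Splitting the increment as \<open>T y (u y - u s - (y - s) u') + (y - s) (T y u' - T s u')\<close>.\<close>
  have "eventually (\<lambda>y. norm ((T y (u y - u s) - (y - s) *\<^sub>R T s u') /\<^sub>R norm (y - s))
      \<le> B * norm (R y) + norm (T y u' - T s u')) (at s)"
    using eventually_at_in_open'[OF S]
  proof eventually_elim
    case (elim y)
    interpret Ty: bounded_linear "T y"
      by (rule linear[OF elim])
    have "T y (R y) = (T y (u y - u s) - (y - s) *\<^sub>R T y u') /\<^sub>R norm (y - s)"
      unfolding R_def by (simp only: Ty.diff Ty.scaleR)
    then have "(T y (u y - u s) - (y - s) *\<^sub>R T s u') /\<^sub>R norm (y - s)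
        = T y (R y) + ((y - s) / norm (y - s)) *\<^sub>R (T y u' - T s u')"
      by (simp add: scaleR_diff_right divide_inverse_commute algebra_simps)
    also have "norm \<dots> \<le> B * norm (R y) + norm (T y u' - T s u')"
    proof -
      have "norm (((y - s) / norm (y - s)) *\<^sub>R (T y u' - T s u')) \<le> norm (T y u' - T s u')"
        by (cases "y = s") simp_all
      then show ?thesis
        using norm_triangle_ineq[of "T y (R y)" "((y - s) / norm (y - s)) *\<^sub>R (T y u' - T s u')"]
          bound[OF elim, of "R y"] by linarith
    qed
    finally show ?case .
  qed
  ultimately have "((\<lambda>y. (T y (u y - u s) - T s (u s - u s) - (y - s) *\<^sub>R T s u') /\<^sub>R norm (y - s))
      \<longlongrightarrow> 0) (at s)"
    by (simp add: Lim_null_comparison)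
  then have "((\<lambda>y. T y (u y - u s)) has_vector_derivative T s u') (at s)"
    unfolding has_vector_derivative_def has_derivative_at_within by (simp add: bounded_linear_scaleR_left)
  from has_vector_derivative_add[OF T_deriv this]
  show ?thesis
  proof (rule has_vector_derivative_transform_within_open[OF _ S])
    show "T y (u s) + T y (u y - u s) = T y (u y)" if "y \<in> S" for y
      using linear[OF that] by (simp add: linear_simps)
  qed
qed

lemma evolution_operator_variation_of_constants:
  fixes Tev :: "real \<Rightarrow> real \<Rightarrow> 'h::{real_normed_vector,complete_space} \<Rightarrow> 'h"
  assumes EV: "evolution_operator T L Dom Tev" and t: "0 \<le> t" "t < T"
    and u_cont: "continuous_on {0..t} u"
    and u_Dom: "\<And>s. s \<in> {0<..<t} \<Longrightarrow> u s \<in> Dom"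
    and u_deriv: "\<And>s. s \<in> {0<..<t} \<Longrightarrow> (u has_vector_derivative u' s) (at s)"
  shows "((\<lambda>s. Tev t s (u' s - L s (u s))) has_integral (u t - Tev t 0 (u 0))) {0..t}"
proof (cases "t = 0")
  case True
  then show ?thesis
    using EV t unfolding evolution_operator_def by (simp add: has_integral_refl)
next
  case False
  with t have "0 < t"
    by simp
  have linear: "\<And>s. s \<in> {0..t} \<Longrightarrow> bounded_linear (Tev t s)"
    and strong: "\<And>g. continuous_on {0..t} (\<lambda>s. Tev t s g)"
    and Tev_deriv: "\<And>g s. g \<in> Dom \<Longrightarrow> s \<in> {0<..<t} \<Longrightarrow>
       ((\<lambda>s. Tev t s g) has_vector_derivative - Tev t s (L s g)) (at s)"
    and Tev_tt: "Tev t t = id"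
    using EV t unfolding evolution_operator_def by auto
  obtain B where bound: "\<And>s g. s \<in> {0..t} \<Longrightarrow> norm (Tev t s g) \<le> B * norm g"
    using uniform_boundedness_compact[OF compact_Icc linear strong] by blast
  have "((\<lambda>s. Tev t s (u s)) has_vector_derivative Tev t s (u' s - L s (u s))) (at s)"
    if s: "s \<in> {0<..<t}" for s
  proof -
    have "continuous (at s) (\<lambda>y. Tev t y (u' s))"
      using continuous_on_interior[OF strong] s by simp
    then have "((\<lambda>s. Tev t s (u s)) has_vector_derivative - Tev t s (L s (u s)) + Tev t s (u' s)) (at s)"
      using s bound linear u_deriv[OF s] Tev_deriv[OF u_Dom[OF s] s]
      by (intro has_vector_derivative_operator_apply[where S = "{0<..<t}" and T = "Tev t" and B = B])
        auto
    then show ?thesis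
      using linear[of s] s by (simp add: linear_simps)
  qed
  with \<open>0 < t\<close> have "((\<lambda>s. Tev t s (u' s - L s (u s))) has_integral (Tev t t (u t) - Tev t 0 (u 0))) {0..t}"
    by (intro fundamental_theorem_of_calculus_interior continuous_on_operator_apply[OF bound linear strong u_cont])
      auto
  then show ?thesis
    by (simp add: Tev_tt)
qed

section \<open>Variational approximations\<close>

locale variational_approximation = smooth_tangent_frame D Z \<Phi> bas
  for D :: "'q::euclidean_space set" and Z :: "(real^'m::finite) set"
    and \<Phi> :: "real^'m \<Rightarrow> 'q \<Rightarrow> real" and bas :: "'m \<Rightarrow> real^'m \<Rightarrow> 'q \<Rightarrow> real" +
  fixes \<Omega> :: "'x::euclidean_space set" and ev :: "'h::{real_normed_vector,complete_space} \<Rightarrow> 'x \<Rightarrow> 'q \<Rightarrow> real"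
    and L :: "real \<Rightarrow> 'h \<Rightarrow> 'h" and T1 :: real and f f' :: "real \<Rightarrow> 'h" and z :: "real \<Rightarrow> 'x \<Rightarrow> real^'m"
  assumes f_in_M: "\<And>t x q. t \<in> {0..<T1} \<Longrightarrow> x \<in> \<Omega> \<Longrightarrow> q \<in> D \<Longrightarrow>
      z t x \<in> Z \<and> ev (f t) x q = \<Phi> (z t x) q"
    and Lf_wL2: "\<And>t x. t \<in> {0<..<T1} \<Longrightarrow> x \<in> \<Omega> \<Longrightarrow> wL2 D (ev (f t) x) (ev (L t (f t)) x)"
begin

abbreviation satisfies_galerkin :: "real \<Rightarrow> 'x \<Rightarrow> bool" where
  "satisfies_galerkin t x \<equiv> tangent \<Phi> D (z t x) (ev (f' t) x) \<and>
     galerkin \<Phi> D (z t x) (ev (f t) x) (ev (f' t) x) (ev (L t (f t)) x)"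

lemma z_in_Z: "t \<in> {0..<T1} \<Longrightarrow> x \<in> \<Omega> \<Longrightarrow> D \<noteq> {} \<Longrightarrow> z t x \<in> Z"
  using f_in_M by blast

lemma f_on_fibre: "t \<in> {0..<T1} \<Longrightarrow> x \<in> \<Omega> \<Longrightarrow> \<forall>q\<in>D. ev (f t) x q = \<Phi> (z t x) q"
  using f_in_M by blast

lemma galerkin_iff_least_squares_at:
  assumes "t \<in> {0<..<T1}" and "x \<in> \<Omega>"
  shows "satisfies_galerkin t x \<longleftrightarrow>
    tangent \<Phi> D (z t x) (ev (f' t) x) \<and>
    (\<forall>g. tangent \<Phi> D (z t x) g \<longrightarrow>
       (LINT q:D|lborel. (ev (f' t) x q - ev (L t (f t)) x q)\<^sup>2 / ev (f t) x q)
         \<le> (LINT q:D|lborel. (g q - ev (L t (f t)) x q)\<^sup>2 / ev (f t) x q))"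
proof (cases "D = {}")
  case True
  then show ?thesis
    by (simp add: galerkin_def set_lebesgue_integral_def)
next
  case False
  with assms show ?thesis
    using galerkin_iff_least_squares[OF z_in_Z f_on_fibre Lf_wL2] by auto
qed

lemma galerkin_iff_projection_at:
  assumes "t \<in> {0<..<T1}" and "x \<in> \<Omega>"
  shows "satisfies_galerkin t x \<longleftrightarrow>
    (\<forall>q\<in>D. ev (f' t) x q = projP D bas (z t x) (ev (f t) x) (ev (L t (f t)) x) q)"
proof (cases "D = {}")
  case True
  then show ?thesis
    by (simp add: galerkin_def tangent_def set_lebesgue_integral_def)
next
  case False
  with assms show ?thesis
    using tangent_galerkin_iff_projection[OF z_in_Z f_on_fibre Lf_wL2] by auto
qed

lemma mass_conservation:
  assumes Lf_mass: "\<And>t x. t \<in> {0<..<T1} \<Longrightarrow> x \<in> \<Omega> \<Longrightarrow>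
      set_integrable lborel D (ev (L t (f t)) x) \<and> (LINT q:D|lborel. ev (L t (f t)) x q) = 0"
    and galerkin: "AE p in lborel. p \<in> {0<..<T1} \<times> \<Omega> \<longrightarrow> satisfies_galerkin (fst p) (snd p)"
    and tangent_f: "AE p in lborel. p \<in> {0<..<T1} \<times> \<Omega> \<longrightarrow>
      tangent \<Phi> D (z (fst p) (snd p)) (ev (f (fst p)) (snd p))"
    and regular: "\<forall>x\<in>\<Omega>. continuous_on {0..<T1} (\<lambda>t. LINT q:D|lborel. ev (f t) x q) \<and>
      (\<forall>t\<in>{0<..<T1}. ((\<lambda>s. LINT q:D|lborel. ev (f s) x q) has_real_derivative
                         (LINT q:D|lborel. ev (f' t) x q)) (at t))"
  shows "AE x in lborel. x \<in> \<Omega> \<longrightarrow>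
    (\<forall>t\<in>{0..<T1}. (LINT q:D|lborel. ev (f t) x q) = (LINT q:D|lborel. ev (f 0) x q))"
proof (rule AE_constant_if_derivative_AE_zero[OF _ regular])
  show "AE p in lborel. p \<in> {0<..<T1} \<times> \<Omega> \<longrightarrow> (LINT q:D|lborel. ev (f' (fst p)) (snd p) q) = 0"
    using galerkin tangent_f
  proof (eventually_elim, intro impI)
    case (elim p)
    assume "p \<in> {0<..<T1} \<times> \<Omega>"
    then obtain t x where p: "p = (t, x)" and t: "t \<in> {0<..<T1}" and x: "x \<in> \<Omega>"
      by blast
    show "(LINT q:D|lborel. ev (f' (fst p)) (snd p) q) = 0"
    proof (cases "D = {}")
      case False
      with t x have "(LINT q:D|lborel. ev (f' t) x q) = (LINT q:D|lborel. ev (L t (f t)) x q)"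
        using elim p Lf_mass[OF t x] by (intro galerkin_conserves_mass[OF z_in_Z f_on_fibre]) auto
      then show ?thesis
        using Lf_mass[OF t x] p by simp
    qed (simp add: set_lebesgue_integral_def)
  qed
qed

lemma error_representation:
  fixes Tev :: "real \<Rightarrow> real \<Rightarrow> 'h \<Rightarrow> 'h"
  assumes ev_inj: "\<And>h h'. (AE p in lborel. p \<in> \<Omega> \<times> D \<longrightarrow> ev h (fst p) (snd p) = ev h' (fst p) (snd p))
      \<Longrightarrow> h = h'"
    and galerkin: "AE p in lborel. p \<in> {0<..<T1} \<times> \<Omega> \<longrightarrow> satisfies_galerkin (fst p) (snd p)"
    and EV: "evolution_operator T L Dom Tev" and "T1 \<le> T"
    and \<psi>: "\<psi> 0 = f 0" "\<And>t. t \<in> {0..<T} \<Longrightarrow> \<psi> t \<in> Dom" "continuous_on {0..<T} \<psi>"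
      "\<And>t. t \<in> {0<..<T} \<Longrightarrow> (\<psi> has_vector_derivative L t (\<psi> t)) (at t)"
    and f_Dom: "\<And>t. t \<in> {0..<T1} \<Longrightarrow> f t \<in> Dom"
    and f_cont: "continuous_on {0..<T1} f"
    and f_deriv: "\<And>t. t \<in> {0<..<T1} \<Longrightarrow> (f has_vector_derivative f' t) (at t)"
    and Pop: "\<forall>s\<in>{0<..<T1}. \<forall>\<phi> x q. x \<in> \<Omega> \<longrightarrow> q \<in> D \<longrightarrow>
      ev (Pop s \<phi>) x q = projP D bas (z s x) (ev (f s) x) (ev \<phi> x) q"
    and t: "t \<in> {0..<T1}"
  shows "((\<lambda>s. Tev t s (L s (f s) - Pop s (L s (f s)))) has_integral (\<psi> t - f t)) {0..t}"
proof -
  have tT: "0 \<le> t" "t < T"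
    using t \<open>T1 \<le> T\<close> by auto
  have linear: "\<And>s. s \<in> {0..t} \<Longrightarrow> bounded_linear (Tev t s)"
    using EV tT unfolding evolution_operator_def by auto
  have "AE p in lborel. p \<in> {0<..<T1} \<times> \<Omega> \<longrightarrow>
      (\<forall>q\<in>D. ev (f' (fst p)) (snd p) q = ev (Pop (fst p) (L (fst p) (f (fst p)))) (snd p) q)"
    using galerkin
  proof eventually_elim
    case (elim p)
    show ?case
    proof (intro impI ballI)
      fix q
      assume p: "p \<in> {0<..<T1} \<times> \<Omega>" and q: "q \<in> D"
      then have "ev (f' (fst p)) (snd p) q
          = projP D bas (z (fst p) (snd p)) (ev (f (fst p)) (snd p)) (ev (L (fst p) (f (fst p))) (snd p)) q"
        using elim galerkin_iff_projection_at[of "fst p" "snd p"] by (auto simp: mem_Times_iff)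
      then show "ev (f' (fst p)) (snd p) q = ev (Pop (fst p) (L (fst p) (f (fst p)))) (snd p) q"
        using Pop p q by (auto simp: mem_Times_iff)
    qed
  qed
  then have f'_eq: "AE s in lborel. s \<in> {0<..<T1} \<longrightarrow> f' s = Pop s (L s (f s))"
    by (intro AE_eq_if_evaluations_AE_eq[where u = f' and v = "\<lambda>s. Pop s (L s (f s))"] ev_inj) simp
  have "((\<lambda>s. Tev t s (L s (\<psi> s) - L s (\<psi> s))) has_integral (\<psi> t - Tev t 0 (\<psi> 0))) {0..t}"
    using tT \<psi>(2,4)
    by (intro evolution_operator_variation_of_constants[OF EV] continuous_on_subset[OF \<psi>(3)]) auto
  then have "((\<lambda>s. 0) has_integral (\<psi> t - Tev t 0 (\<psi> 0))) {0..t}"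
    by (rule has_integral_eq[rotated]) (simp add: linear linear_simps)
  then have "\<psi> t - Tev t 0 (\<psi> 0) = 0"
    using has_integral_0 by (rule has_integral_unique)
  then have \<psi>_eq: "\<psi> t = Tev t 0 (f 0)"
    using \<psi>(1) by simp
  have ftc: "((\<lambda>s. Tev t s (f' s - L s (f s))) has_integral (f t - Tev t 0 (f 0))) {0..t}"
    using tT t f_Dom f_deriv
    by (intro evolution_operator_variation_of_constants[OF EV] continuous_on_subset[OF f_cont]) auto
  have integrand_AE: "AE s in lborel. s \<in> {0..t} \<longrightarrow>
      Tev t s (f' s - L s (f s)) = - Tev t s (L s (f s) - Pop s (L s (f s)))"
    using f'_eq AE_lborel_singleton[of 0] AE_lborel_singleton[of t]
  proof eventually_elim
    case (elim s)
    show ?case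
    proof
      assume s: "s \<in> {0..t}"
      then show "Tev t s (f' s - L s (f s)) = - Tev t s (L s (f s) - Pop s (L s (f s)))"
        using elim t linear[OF s] by (simp add: linear_simps)
    qed
  qed
  have "((\<lambda>s. - Tev t s (L s (f s) - Pop s (L s (f s)))) has_integral (f t - \<psi> t)) {0..t}"
    using ftc unfolding has_integral_AE[OF integrand_AE] \<psi>_eq .
  from has_integral_neg[OF this] show ?thesis
    by simp
qed

end

theorem proposition1:
  fixes \<Omega> :: "'x::euclidean_space set" and D :: "'q::euclidean_space set"
    and Z :: "(real^'m::finite) set"
    and ev :: "'h::{real_inner,complete_space} \<Rightarrow> 'x \<Rightarrow> 'q \<Rightarrow> real"
    and Dom :: "'h set" and L :: "real \<Rightarrow> 'h \<Rightarrow> 'h"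
    and T T1 :: real and \<psi>0 :: 'h and \<psi> :: "real \<Rightarrow> 'h"
    and \<Phi> :: "real^'m \<Rightarrow> 'q \<Rightarrow> real" and bas :: "'m \<Rightarrow> real^'m \<Rightarrow> 'q \<Rightarrow> real"
    and f f' :: "real \<Rightarrow> 'h" and z :: "real \<Rightarrow> 'x \<Rightarrow> real^'m"
  assumes dom_\<Omega>: "bounded \<Omega>" "lipschitz_domain \<Omega>"
    and open_D: "open D"
    and ev_linear: "\<And>a b h h' x q. ev (a *\<^sub>R h + b *\<^sub>R h') x q = a * ev h x q + b * ev h' x q"
    and ev_inj: "\<And>h h'. (AE p in lborel. p \<in> \<Omega> \<times> D \<longrightarrow> ev h (fst p) (snd p) = ev h' (fst p) (snd p))
                   \<Longrightarrow> h = h'"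
    and Dom_subspace: "subspace Dom"
    and L_linear: "\<And>t a b u v. t \<in> {0<..<T} \<Longrightarrow> u \<in> Dom \<Longrightarrow> v \<in> Dom \<Longrightarrow>
                      L t (a *\<^sub>R u + b *\<^sub>R v) = a *\<^sub>R L t u + b *\<^sub>R L t v"
    and L_mass: "\<And>t \<phi> x. t \<in> {0<..<T} \<Longrightarrow> \<phi> \<in> Dom \<Longrightarrow> x \<in> \<Omega> \<Longrightarrow>
                   set_integrable lborel D (ev (L t \<phi>) x) \<and> (LINT q:D|lborel. ev (L t \<phi>) x q) = 0"
    and \<psi>0_density: "AE x in lborel. x \<in> \<Omega> \<longrightarrow>
                   (\<forall>q\<in>D. ev \<psi>0 x q \<ge> 0) \<and> set_integrable lborel D (ev \<psi>0 x) \<and>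
                   (LINT q:D|lborel. ev \<psi>0 x q) = 1"
    and \<psi>_solves: "\<psi> 0 = \<psi>0" "\<And>t. t \<in> {0..<T} \<Longrightarrow> \<psi> t \<in> Dom" "continuous_on {0..<T} \<psi>"
                 "\<And>t. t \<in> {0<..<T} \<Longrightarrow> (\<psi> has_vector_derivative L t (\<psi> t)) (at t)"
    and Z_open: "open Z"
    and \<Phi>_smooth: "smooth_on (Z \<times> D) (\<lambda>p. \<Phi> (fst p) (snd p))"
    and \<Phi>_pos: "\<And>\<zeta> q. \<zeta> \<in> Z \<Longrightarrow> q \<in> D \<Longrightarrow> \<Phi> \<zeta> q > 0"
    and full_rank: "\<And>\<zeta> w. \<zeta> \<in> Z \<Longrightarrow> (\<forall>q\<in>D. frechet_derivative (\<lambda>z. \<Phi> z q) (at \<zeta>) w = 0) \<Longrightarrow> w = 0"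
    and bas_tangent: "\<And>\<zeta> m. \<zeta> \<in> Z \<Longrightarrow> tangent \<Phi> D \<zeta> (bas m \<zeta>) \<and> wL2 D (\<Phi> \<zeta>) (bas m \<zeta>)"
    and bas_orthonormal: "\<And>\<zeta> m l. \<zeta> \<in> Z \<Longrightarrow>
                   (LINT q:D|lborel. bas m \<zeta> q * bas l \<zeta> q / \<Phi> \<zeta> q) = (if m = l then 1 else 0)"
    and bas_spans: "\<And>\<zeta> g. \<zeta> \<in> Z \<Longrightarrow> tangent \<Phi> D \<zeta> g \<Longrightarrow>
                   \<exists>c. \<forall>q\<in>D. g q = (\<Sum>m\<in>UNIV. c m * bas m \<zeta> q)"
    and T1: "0 < T1" "T1 \<le> T"
    and f_in_M: "\<And>t x q. t \<in> {0..<T1} \<Longrightarrow> x \<in> \<Omega> \<Longrightarrow> q \<in> D \<Longrightarrow>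
                   z t x \<in> Z \<and> ev (f t) x q = \<Phi> (z t x) q"
    and f_Dom: "\<And>t. t \<in> {0..<T1} \<Longrightarrow> f t \<in> Dom"
    and f_cont: "continuous_on {0..<T1} f"
    and f_deriv: "\<And>t. t \<in> {0<..<T1} \<Longrightarrow> (f has_vector_derivative f' t) (at t)"
    and Lf_L2: "\<And>t x. t \<in> {0<..<T1} \<Longrightarrow> x \<in> \<Omega> \<Longrightarrow> wL2 D (ev (f t) x) (ev (L t (f t)) x)"
  shows
    \<comment> \<open>(i) Galerkin condition iff minimisation of the weighted residual over the tangent space\<close>
    "(\<forall>t\<in>{0<..<T1}. \<forall>x\<in>\<Omega>.
        (tangent \<Phi> D (z t x) (ev (f' t) x) \<and>
         galerkin \<Phi> D (z t x) (ev (f t) x) (ev (f' t) x) (ev (L t (f t)) x))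
      \<longleftrightarrow>
        (tangent \<Phi> D (z t x) (ev (f' t) x) \<and>
         (\<forall>g. tangent \<Phi> D (z t x) g \<longrightarrow>
            (LINT q:D|lborel. (ev (f' t) x q - ev (L t (f t)) x q)\<^sup>2 / ev (f t) x q)
              \<le> (LINT q:D|lborel. (g q - ev (L t (f t)) x q)\<^sup>2 / ev (f t) x q))))
     \<and>
     \<comment> \<open>(ii) Galerkin condition iff \<partial>_t f = P_f L f\<close>
     (\<forall>t\<in>{0<..<T1}. \<forall>x\<in>\<Omega>.
        (tangent \<Phi> D (z t x) (ev (f' t) x) \<and>
         galerkin \<Phi> D (z t x) (ev (f t) x) (ev (f' t) x) (ev (L t (f t)) x))
      \<longleftrightarrow>
        (\<forall>q\<in>D. ev (f' t) x q = projP D bas (z t x) (ev (f t) x) (ev (L t (f t)) x) q))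
     \<and>
     \<comment> \<open>(iii) mass conservation\<close>
     ((AE p in lborel. p \<in> {0<..<T1} \<times> \<Omega> \<longrightarrow>
         tangent \<Phi> D (z (fst p) (snd p)) (ev (f' (fst p)) (snd p)) \<and>
         galerkin \<Phi> D (z (fst p) (snd p)) (ev (f (fst p)) (snd p)) (ev (f' (fst p)) (snd p))
                  (ev (L (fst p) (f (fst p))) (snd p)))
      \<longrightarrow> (AE p in lborel. p \<in> {0<..<T1} \<times> \<Omega> \<longrightarrow>
            tangent \<Phi> D (z (fst p) (snd p)) (ev (f (fst p)) (snd p)))
      \<longrightarrow> (\<forall>x\<in>\<Omega>. continuous_on {0..<T1} (\<lambda>t. LINT q:D|lborel. ev (f t) x q) \<and>
            (\<forall>t\<in>{0<..<T1}. ((\<lambda>s. LINT q:D|lborel. ev (f s) x q) has_real_derivative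
                               (LINT q:D|lborel. ev (f' t) x q)) (at t)))
      \<longrightarrow> (AE x in lborel. x \<in> \<Omega> \<longrightarrow>
            (\<forall>t\<in>{0..<T1}. (LINT q:D|lborel. ev (f t) x q) = (LINT q:D|lborel. ev (f 0) x q))))
     \<and>
     \<comment> \<open>(iv) error representation via the evolution operator\<close>
     (\<forall>Tev Pop.
      (AE p in lborel. p \<in> {0<..<T1} \<times> \<Omega> \<longrightarrow>
         tangent \<Phi> D (z (fst p) (snd p)) (ev (f' (fst p)) (snd p)) \<and>
         galerkin \<Phi> D (z (fst p) (snd p)) (ev (f (fst p)) (snd p)) (ev (f' (fst p)) (snd p))
                  (ev (L (fst p) (f (fst p))) (snd p)))
      \<longrightarrow> evolution_operator T L Dom Tev
      \<longrightarrow> \<psi>0 = f 0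
      \<longrightarrow> (\<forall>s\<in>{0<..<T1}. \<forall>\<phi> x q. x \<in> \<Omega> \<longrightarrow> q \<in> D \<longrightarrow>
            ev (Pop s \<phi>) x q = projP D bas (z s x) (ev (f s) x) (ev \<phi> x) q)
      \<longrightarrow> (\<forall>t\<in>{0..<T1}.
            ((\<lambda>s. Tev t s (L s (f s) - Pop s (L s (f s)))) has_integral (\<psi> t - f t)) {0..t}))"
proof -
  \<comment> \<open>Not needed: the regularity of \<open>\<Omega>\<close>, openness of \<open>Z\<close>, the rank condition, linearity
    of \<open>ev\<close> and \<open>L\<close>, the subspace property of \<open>Dom\<close> and the initial density.\<close>
  interpret variational_approximation D Z \<Phi> bas \<Omega> ev L T1 f f' z
    by unfold_locales (fact open_D \<Phi>_smooth \<Phi>_pos bas_tangent bas_orthonormal bas_spans f_in_M Lf_L2)+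
  have Lf_mass: "\<And>t x. t \<in> {0<..<T1} \<Longrightarrow> x \<in> \<Omega> \<Longrightarrow>
      set_integrable lborel D (ev (L t (f t)) x) \<and> (LINT q:D|lborel. ev (L t (f t)) x q) = 0"
    using L_mass f_Dom T1 by auto
  show ?thesis
    by (intro conjI ballI allI impI galerkin_iff_least_squares_at galerkin_iff_projection_at
        mass_conservation[OF Lf_mass]
        error_representation[OF ev_inj _ _ T1(2) _ \<psi>_solves(2-4) f_Dom f_cont f_deriv])
      (simp_all add: \<psi>_solves(1))
qed

end
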